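(* (a) Let $\mathbb{X}$ be a $0$-dimensional Polish space and $(C^\varepsilon_i)_{(\varepsilon,i)\in2\times\omega}$ a family of pairwise disjoint clopen subsets of $\mathbb{X}$; put $R:=\bigcup_{i\in\omega}C^0_i\times C^1_i$ and $Z:=\mathbb{X}\setminus\bigcup_{(\varepsilon,i)}C^\varepsilon_i$. Assume $Z\neq\emptyset$ and that no clopen set $D\subseteq\mathbb{X}$ meeting $Z$ satisfies $R\cap D^2=\emptyset$. Then there is no continuous $c:\mathbb{X}\to\omega$ with $c(x)\neq c(y)$ for all $(x,y)\in R$. (b) There exists a family of pairwise disjoint clopen subsets of $2^\omega$ indexed by $2\times\omega$ satisfying the hypotheses of (a). *)

theory Defs
  imports "HOL-Analysis.Analysis"
begin

text \<open>A family (C e i), indexed by 2 x omega (here: bool x nat, False = 0, True = 1),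
  in a topological space (the topology of the type).\<close>

definition relR :: "(bool \<Rightarrow> nat \<Rightarrow> 'a set) \<Rightarrow> ('a \<times> 'a) set" where
  "relR C = (\<Union>i. C False i \<times> C True i)"

definition setZ :: "(bool \<Rightarrow> nat \<Rightarrow> 'a set) \<Rightarrow> 'a set" where
  "setZ C = UNIV - (\<Union>e i. C e i)"

definition clopen_disjoint_family :: "(bool \<Rightarrow> nat \<Rightarrow> 'a::topological_space set) \<Rightarrow> bool" where
  "clopen_disjoint_family C \<longleftrightarrow>
     (\<forall>e i. open (C e i) \<and> closed (C e i)) \<and>
     (\<forall>e i e' j. (e, i) \<noteq> (e', j) \<longrightarrow> C e i \<inter> C e' j = {})"

definition good_family :: "(bool \<Rightarrow> nat \<Rightarrow> 'a::topological_space set) \<Rightarrow> bool" where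
  "good_family C \<longleftrightarrow>
     clopen_disjoint_family C \<and>
     setZ C \<noteq> {} \<and>
     (\<forall>D. open D \<and> closed D \<and> D \<inter> setZ C \<noteq> {} \<longrightarrow> relR C \<inter> (D \<times> D) \<noteq> {})"

end

theory Submission
  imports Defs
begin

text \<open>For part (b), let C e i be the set of sequences whose first 1 is at position i and whose
  next entry is e. Then Z consists of the zero sequence alone, and every neighbourhood of it
  contains the R-related pair with first 1 at a large position n, followed by 0 resp. 1.\<close>

lemma clopen_vimage_discrete:
  fixes c :: "'a::topological_space \<Rightarrow> 'b::discrete_topology"
  assumes "continuous_on UNIV c"
  shows "open (c -` B)" and "closed (c -` B)"
proof -
  have "\<And>B. open (c -` B)"
    using assms by (simp add: open_vimage open_discrete)
  then show "open (c -` B)" and "closed (c -` B)"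
    by (simp_all add: closed_def vimage_Compl[symmetric])
qed

lemma good_family_no_continuous_colouring:
  fixes C :: "bool \<Rightarrow> nat \<Rightarrow> 'a::topological_space set"
    and c :: "'a \<Rightarrow> 'b::discrete_topology"
  assumes "good_family C" and "continuous_on UNIV c"
  shows "\<exists>(x, y) \<in> relR C. c x = c y"
proof -
  have "setZ C \<noteq> {}"
    using assms(1) by (simp add: good_family_def)
  then obtain z where z: "z \<in> setZ C" by blast
  let ?D = "c -` {c z}"
  have "relR C \<inter> (?D \<times> ?D) \<noteq> {}"
    using assms(1) z clopen_vimage_discrete[OF assms(2)] unfolding good_family_def by blast
  then obtain x y where xy: "(x, y) \<in> relR C" and "x \<in> ?D" "y \<in> ?D" by auto
  then have "c x = c y" by simp
  with xy show ?thesis by blast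
qed

lemma open_fun_contains_cylinder:
  fixes x :: "nat \<Rightarrow> 'b::topological_space"
  assumes "open D" and "x \<in> D"
  obtains n where "\<And>y. (\<And>i. i < n \<Longrightarrow> y i = x i) \<Longrightarrow> y \<in> D"
proof -
  have "openin (product_topology (\<lambda>_. euclidean) UNIV) D"
    using assms(1) by (simp add: open_fun_def)
  from product_topology_open_contains_basis[OF this assms(2)]
  obtain X where X: "x \<in> (\<Pi>\<^sub>E i\<in>UNIV. X i)" "finite {i. X i \<noteq> UNIV}"
      "(\<Pi>\<^sub>E i\<in>UNIV. X i) \<subseteq> D"
    by (metis topspace_euclidean)
  obtain m where "\<forall>i\<in>{i. X i \<noteq> UNIV}. i \<le> m"
    using X(2) finite_nat_set_iff_bounded_le by blast
  then have cofinite: "X i = UNIV" if "\<not> i < Suc m" for i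
    using that by force
  have "y \<in> D" if "\<And>i. i < Suc m \<Longrightarrow> y i = x i" for y
  proof -
    have "y i \<in> X i" for i
    proof (cases "i < Suc m")
      case True
      then show ?thesis using that PiE_mem[OF X(1)] by simp
    next
      case False
      then show ?thesis using cofinite by simp
    qed
    then show ?thesis using X(3) by (auto simp: PiE_iff)
  qed
  then show thesis by (rule that)
qed

definition cantor_block :: "bool \<Rightarrow> nat \<Rightarrow> (nat \<Rightarrow> bool) set" where
  "cantor_block e i = {x. (\<forall>j<i. \<not> x j) \<and> x i \<and> x (Suc i) = e}"

lemma cantor_block_clopen: "open (cantor_block e i)" "closed (cantor_block e i)"
proof -
  let ?fibre = "\<lambda>j b. (\<lambda>x :: nat \<Rightarrow> bool. x j) -` {b}"
  have block: "cantor_block e i = (\<Inter>j<i. ?fibre j False) \<inter> ?fibre i True \<inter> ?fibre (Suc i) e"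
    unfolding cantor_block_def by auto
  have "open (?fibre j b)" "closed (?fibre j b)" for j b
    by (rule clopen_vimage_discrete[OF continuous_on_product_coordinates])+
  then show "open (cantor_block e i)" "closed (cantor_block e i)"
    unfolding block by (auto intro!: open_Int open_INT closed_Int closed_INT)
qed

lemma cantor_block_disjoint:
  assumes "(e, i) \<noteq> (e', j)"
  shows "cantor_block e i \<inter> cantor_block e' j = {}"
proof -
  have "i = j" if "x \<in> cantor_block e i" "x \<in> cantor_block e' j" for x
    using that unfolding cantor_block_def by (auto intro: linorder_cases[of i j])
  then show ?thesis using assms unfolding cantor_block_def by auto
qed

lemma setZ_cantor_block: "setZ cantor_block = {\<lambda>_. False}"
proof (intro equalityI subsetI)
  fix x assume x: "x \<in> setZ cantor_block"
  show "x \<in> {\<lambda>_. False}"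
  proof (rule ccontr)
    assume "x \<notin> {\<lambda>_. False}"
    then obtain k where "x k" by auto
    define i where "i = (LEAST k. x k)"
    have "x i" using \<open>x k\<close> unfolding i_def by (rule LeastI)
    moreover have "\<forall>j<i. \<not> x j" unfolding i_def using not_less_Least by blast
    ultimately have "x \<in> cantor_block (x (Suc i)) i" by (simp add: cantor_block_def)
    then show False using x unfolding setZ_def by blast
  qed
qed (auto simp: setZ_def cantor_block_def)

lemma good_family_cantor_block: "good_family cantor_block"
  unfolding good_family_def clopen_disjoint_family_def
proof (intro conjI allI impI)
  fix D :: "(nat \<Rightarrow> bool) set"
  assume D: "open D \<and> closed D \<and> D \<inter> setZ cantor_block \<noteq> {}"
  then obtain n where n: "\<And>y. (\<And>i. i < n \<Longrightarrow> y i = False) \<Longrightarrow> y \<in> D"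
    using open_fun_contains_cylinder[of D "\<lambda>_. False"] by (auto simp: setZ_cantor_block)
  let ?x = "\<lambda>j. j = n" and ?y = "\<lambda>j. j = n \<or> j = Suc n"
  have "(?x, ?y) \<in> relR cantor_block"
    unfolding relR_def cantor_block_def by auto
  moreover have "?x \<in> D" "?y \<in> D" by (auto intro: n)
  ultimately show "relR cantor_block \<inter> (D \<times> D) \<noteq> {}" by blast
qed (simp_all add: cantor_block_clopen cantor_block_disjoint setZ_cantor_block)

theorem lemma3p2:
  shows "(\<forall>C :: bool \<Rightarrow> nat \<Rightarrow> 'a::polish_space set.
            (euclidean :: 'a topology) dim_le 0 \<and> good_family C \<longrightarrow>
            \<not> (\<exists>c :: 'a \<Rightarrow> nat. continuous_on UNIV c \<and>
                   (\<forall>(x, y) \<in> relR C. c x \<noteq> c y)))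
       \<and> (\<exists>C :: bool \<Rightarrow> nat \<Rightarrow> (nat \<Rightarrow> bool) set. good_family C)"
proof (intro conjI allI impI notI)
  fix C :: "bool \<Rightarrow> nat \<Rightarrow> 'a set"
  assume "euclidean dim_le 0 \<and> good_family C"
    and "\<exists>c :: 'a \<Rightarrow> nat. continuous_on UNIV c \<and> (\<forall>(x, y) \<in> relR C. c x \<noteq> c y)"
  then obtain c :: "'a \<Rightarrow> nat" where "good_family C" "continuous_on UNIV c"
      and proper: "\<forall>(x, y) \<in> relR C. c x \<noteq> c y"
    by blast
  from good_family_no_continuous_colouring[OF this(1,2)] proper show False
    by blast
qed (use good_family_cantor_block in blast)

end
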